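(* Let $\mathcal{L}$ be a nonempty set and $\mathcal{C}: 2^{\mathcal{L}}\to 2^{\mathcal{L}}$ a C-logics. For every $A\subseteq\mathcal{L}$, $\mathcal{C}(A)=\mathrm{Cn}(\mathcal{C}(A))=\mathcal{C}(\mathrm{Cn}(A))$.
   Context: A C-logics is a map $\mathcal{C}: 2^{\mathcal{L}}\to 2^{\mathcal{L}}$ satisfying Inclusion ($A\subseteq\mathcal{C}(A)$) and Cumulativity ($A\subseteq B\subseteq\mathcal{C}(A)\Rightarrow\mathcal{C}(A)=\mathcal{C}(B)$) for all $A,B\subseteq\mathcal{L}$. A theory is a set $T\subseteq\mathcal{L}$ with $\mathcal{C}(T)=T$. $\mathrm{Cn}(A)=\bigcap\{T : T\supseteq A,\ T\text{ a theory}\}$. *)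

theory Defs
  imports Main
begin

text \<open>The language L is the universe of the type 'a (types are nonempty);
  a consequence operator is a map C :: 'a set => 'a set.\<close>

definition C_logic :: "('a set \<Rightarrow> 'a set) \<Rightarrow> bool" where
  "C_logic C \<longleftrightarrow> (\<forall>A. A \<subseteq> C A) \<and>
     (\<forall>A B. A \<subseteq> B \<and> B \<subseteq> C A \<longrightarrow> C A = C B)"

definition is_theory :: "('a set \<Rightarrow> 'a set) \<Rightarrow> 'a set \<Rightarrow> bool" where
  "is_theory C T \<longleftrightarrow> C T = T"

definition Cn :: "('a set \<Rightarrow> 'a set) \<Rightarrow> 'a set \<Rightarrow> 'a set" where
  "Cn C A = \<Inter>{T. A \<subseteq> T \<and> is_theory C T}"

end

theory Submission
  imports Defs
begin

text \<open>By cumulativity \<open>C A\<close> is itself a theory, and the least theory containing it.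
  Since \<open>Cn C A\<close> lies between \<open>A\<close> and that theory, cumulativity applies once more
  and gives \<open>C (Cn C A) = C A\<close>.\<close>

lemma C_logic_inclusion: "C_logic C \<Longrightarrow> A \<subseteq> C A"
  unfolding C_logic_def by blast

lemma C_logic_cumulativity: "C_logic C \<Longrightarrow> A \<subseteq> B \<Longrightarrow> B \<subseteq> C A \<Longrightarrow> C A = C B"
  unfolding C_logic_def by blast

lemma C_logic_idempotent:
  assumes "C_logic C"
  shows "C (C A) = C A"
  using C_logic_cumulativity[OF assms C_logic_inclusion[OF assms] order_refl] by (rule sym)

lemma is_theory_C: "C_logic C \<Longrightarrow> is_theory C (C A)"
  unfolding is_theory_def by (rule C_logic_idempotent)

lemma subset_Cn: "A \<subseteq> Cn C A"
  unfolding Cn_def by blast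

lemma Cn_least: "A \<subseteq> T \<Longrightarrow> is_theory C T \<Longrightarrow> Cn C A \<subseteq> T"
  unfolding Cn_def by blast

lemma Cn_theory: "is_theory C T \<Longrightarrow> Cn C T = T"
  using Cn_least[OF order_refl] subset_Cn by (rule antisym)

theorem lemma10:
  fixes C :: "'a set \<Rightarrow> 'a set" and A :: "'a set"
  assumes "C_logic C"
  shows "C A = Cn C (C A) \<and> Cn C (C A) = C (Cn C A)"
proof -
  have theory_CA: "is_theory C (C A)"
    using assms by (rule is_theory_C)
  then have Cn_CA: "Cn C (C A) = C A"
    by (rule Cn_theory)
  have "Cn C A \<subseteq> C A"
    using C_logic_inclusion[OF assms] theory_CA by (rule Cn_least)
  then have "C A = C (Cn C A)"
    by (rule C_logic_cumulativity[OF assms subset_Cn])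
  with Cn_CA show ?thesis
    by metis
qed

end
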